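(* Every equilibrium of system $(\ast\ast)$ in the open cube $(0,1)^3$ (i.e. every point $(x^*,y^*,\tfrac12)\in(0,1)^3$ with $(1+\theta_1)x^*+(1+\theta_2)y^*=2$) is neutrally stable: it is Lyapunov stable but not asymptotically stable.
   Context: Modified Prisoner's Dilemma system. Fix constants $\delta_{PS_1}=P_1-S_1>0$, $\delta_{TR_1}=T_1-R_1>0$, $\delta_{PS_2}=P_2-S_2>0$, $\delta_{TR_2}=T_2-R_2>0$ and $\theta_1,\theta_2>0$. Put $\phi_1(y)=\delta_{PS_1}+(\delta_{TR_1}-\delta_{PS_1})y$ and $\phi_2(x)=\delta_{PS_2}+(\delta_{TR_2}-\delta_{PS_2})x$. System $(\ast\ast)$ on $[0,1]^3$ is $\dot x = x(1-x)\phi_1(y)(1-2r)$, $\dot y = y(1-y)\phi_2(x)(1-2r)$, $\dot r = r(1-r)[(1+\theta_1)x+(1+\theta_2)y-2]$. *)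

theory Defs
  imports "HOL-Analysis.Analysis"
begin

text \<open>The vector field of the modified Prisoner's Dilemma system (**), with
  parameters dPS1 = P1 - S1, dTR1 = T1 - R1, dPS2 = P2 - S2, dTR2 = T2 - R2,
  th1, th2.  States are triples (x, y, r).\<close>

definition phi :: "real \<Rightarrow> real \<Rightarrow> real \<Rightarrow> real" where
  "phi dPS dTR s = dPS + (dTR - dPS) * s"

definition pd_field ::
  "real \<Rightarrow> real \<Rightarrow> real \<Rightarrow> real \<Rightarrow> real \<Rightarrow> real \<Rightarrow> real \<times> real \<times> real \<Rightarrow> real \<times> real \<times> real" where
  "pd_field dPS1 dTR1 dPS2 dTR2 th1 th2 = (\<lambda>(x, y, r).
     (x * (1 - x) * phi dPS1 dTR1 y * (1 - 2 * r),
      y * (1 - y) * phi dPS2 dTR2 x * (1 - 2 * r),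
      r * (1 - r) * ((1 + th1) * x + (1 + th2) * y - 2)))"

definition is_solution :: "('a::real_normed_vector \<Rightarrow> 'a) \<Rightarrow> (real \<Rightarrow> 'a) \<Rightarrow> 'a \<Rightarrow> bool" where
  "is_solution F u x0 \<longleftrightarrow> u 0 = x0 \<and>
     (\<forall>t\<ge>0. (u has_vector_derivative F (u t)) (at t within {0..}))"

definition lyapunov_stable :: "('a::real_normed_vector \<Rightarrow> 'a) \<Rightarrow> 'a \<Rightarrow> bool" where
  "lyapunov_stable F p \<longleftrightarrow>
     (\<forall>\<epsilon>>0. \<exists>\<delta>>0. \<forall>x0. dist x0 p < \<delta> \<longrightarrow>
        (\<exists>u. is_solution F u x0) \<and>
        (\<forall>u. is_solution F u x0 \<longrightarrow> (\<forall>t\<ge>0. dist (u t) p < \<epsilon>)))"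

definition asymptotically_stable :: "('a::real_normed_vector \<Rightarrow> 'a) \<Rightarrow> 'a \<Rightarrow> bool" where
  "asymptotically_stable F p \<longleftrightarrow> lyapunov_stable F p \<and>
     (\<exists>\<delta>>0. \<forall>x0. dist x0 p < \<delta> \<longrightarrow>
        (\<forall>u. is_solution F u x0 \<longrightarrow> (u \<longlongrightarrow> p) at_top))"

definition neutrally_stable :: "('a::real_normed_vector \<Rightarrow> 'a) \<Rightarrow> 'a \<Rightarrow> bool" where
  "neutrally_stable F p \<longleftrightarrow> lyapunov_stable F p \<and> \<not> asymptotically_stable F p"

end

theory Submission
  imports Defs
begin

text \<open>With P and Q the antiderivatives of phi2(x) / (x (1 - x)) and phi1(y) / (y (1 - y)),
  both P(x) and Q(y) have time derivative phi1 phi2 (1 - 2r), so H = P(x) - Q(y) is conserved.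
  On a level set of H, parametrised by s = Q(y), the r-equation reads
  d/ds ln (r (1 - r)) = growth / (phi1 phi2), where growth = (1 + th1) x + (1 + th2) y - 2;
  integrating gives a second conserved quantity V. On the level set of H through p, V has a
  strict minimum at p (growth changes sign at p along the level set, and r (1 - r) is maximal
  at r = 1/2), so |H - H(p)| + |V - V(p)| is a conserved Lyapunov function and p is stable.
  Solutions exist because near p the field agrees with a globally Lipschitz one.
  The equilibria form a segment through p, so p is not asymptotically stable.\<close>

section \<open>Existence of solutions by Picard iteration\<close>

lemma integral_power_from_0:
  fixes t :: real
  assumes "0 \<le> t"
  shows "integral {0..t} (\<lambda>s. s ^ n) = t ^ Suc n / Suc n"
proof -
  have "((\<lambda>s. s ^ Suc n / Suc n) has_real_derivative s ^ n) (at s within {0..t})" for s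
    using DERIV_cdivide[OF DERIV_pow[of "Suc n" s], of "Suc n"] by (simp add: DERIV_subset)
  then have "((\<lambda>s. s ^ n) has_integral t ^ Suc n / Suc n - 0 ^ Suc n / Suc n) {0..t}"
    using assms by (intro fundamental_theorem_of_calculus)
      (auto simp: has_real_derivative_iff_has_vector_derivative[symmetric])
  then show ?thesis by (simp add: integral_unique)
qed

primrec picard_iterate :: "('a::banach \<Rightarrow> 'a) \<Rightarrow> 'a \<Rightarrow> nat \<Rightarrow> real \<Rightarrow> 'a" where
  "picard_iterate G x0 0 = (\<lambda>t. x0)"
| "picard_iterate G x0 (Suc n) = (\<lambda>t. x0 + integral {0..t} (\<lambda>s. G (picard_iterate G x0 n s)))"

declare picard_iterate.simps(2) [simp del]

lemma picard_iterate_Suc: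
  "picard_iterate G x0 (Suc n) t = x0 + integral {0..t} (\<lambda>s. G (picard_iterate G x0 n s))"
  by (simp add: picard_iterate.simps(2))

context
  fixes G :: "'a::banach \<Rightarrow> 'a" and K :: real and x0 :: 'a
  assumes G_lipschitz: "K-lipschitz_on UNIV G"
begin

private abbreviation "u \<equiv> picard_iterate G x0"

lemma continuous_on_picard_iterate: "continuous_on {0..T} (u n)"
proof (induction n)
  case (Suc n)
  have "continuous_on {0..T} (\<lambda>s. G (u n s))"
    using continuous_on_compose2[OF lipschitz_on_continuous_on[OF G_lipschitz] Suc] by auto
  then show ?case
    unfolding picard_iterate_Suc[abs_def]
    by (intro continuous_intros indefinite_integral_continuous_1 integrable_continuous_real)
qed simp

lemma integrable_picard_iterate: "(\<lambda>s. G (u n s)) integrable_on {0..T}"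
  using continuous_on_compose2[OF lipschitz_on_continuous_on[OF G_lipschitz]
      continuous_on_picard_iterate]
  by (auto intro!: integrable_continuous_real)

lemma picard_iterate_step_bound:
  assumes "0 \<le> t"
  shows "norm (u (Suc n) t - u n t) \<le> norm (G x0) * K ^ n * t ^ Suc n / fact (Suc n)"
  using assms
proof (induction n arbitrary: t)
  case (Suc n)
  have K: "0 \<le> K" using G_lipschitz lipschitz_on_nonneg by blast
  let ?c = "norm (G x0) * K ^ Suc n / fact (Suc n)"
  have "norm (u (Suc (Suc n)) t - u (Suc n) t)
      = norm (integral {0..t} (\<lambda>s. G (u (Suc n) s) - G (u n s)))"
    unfolding picard_iterate_Suc[of G x0 "Suc n" t] picard_iterate_Suc[of G x0 n t]
    by (simp add: integral_diff integrable_picard_iterate)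
  also have "\<dots> \<le> integral {0..t} (\<lambda>s. ?c * s ^ Suc n)"
  proof (rule integral_norm_bound_integral)
    fix s assume s: "s \<in> {0..t}"
    have "norm (G (u (Suc n) s) - G (u n s)) \<le> K * norm (u (Suc n) s - u n s)"
      using G_lipschitz by (rule lipschitz_on_normD) auto
    also have "\<dots> \<le> K * (norm (G x0) * K ^ n * s ^ Suc n / fact (Suc n))"
      using Suc.IH[of s] s K by (intro mult_left_mono) auto
    finally show "norm (G (u (Suc n) s) - G (u n s)) \<le> ?c * s ^ Suc n"
      by (simp add: field_simps)
  qed (intro integrable_diff integrable_picard_iterate integrable_continuous_real
      continuous_intros)+
  also have "\<dots> = ?c * (t ^ Suc (Suc n) / Suc (Suc n))"
    using integral_power_from_0[OF Suc.prems, of "Suc n"] by (simp del: power_Suc)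
  also have "\<dots> = norm (G x0) * K ^ Suc n * t ^ Suc (Suc n) / fact (Suc (Suc n))"
    by (simp add: field_simps del: of_nat_Suc)
  finally show ?case .
qed (simp add: picard_iterate_Suc)

definition picard_solution :: "real \<Rightarrow> 'a" where
  "picard_solution t = x0 + (\<Sum>n. u (Suc n) t - u n t)"

lemma uniform_limit_picard_iterate: "uniform_limit {0..T} u picard_solution sequentially"
proof -
  have K: "0 \<le> K" using G_lipschitz lipschitz_on_nonneg by blast
  let ?B = "\<lambda>n. norm (G x0) * \<bar>T\<bar> * ((K * \<bar>T\<bar>) ^ n /\<^sub>R fact n)"
  have "uniform_limit {0..T} (\<lambda>N t. \<Sum>n<N. u (Suc n) t - u n t)
      (\<lambda>t. \<Sum>n. u (Suc n) t - u n t) sequentially"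
  proof (rule Weierstrass_m_test)
    show "summable ?B"
      using summable_exp_generic[of "K * \<bar>T\<bar>"] by (intro summable_mult)
    fix n t assume t: "t \<in> {0..T}"
    have "norm (u (Suc n) t - u n t) \<le> norm (G x0) * K ^ n * t ^ Suc n / fact (Suc n)"
      using t by (intro picard_iterate_step_bound) auto
    also have "\<dots> \<le> norm (G x0) * K ^ n * \<bar>T\<bar> ^ Suc n / fact n"
      using t K by (intro frac_le mult_left_mono power_mono fact_mono) auto
    also have "\<dots> = ?B n" by (simp add: field_simps power_mult_distrib)
    finally show "norm (u (Suc n) t - u n t) \<le> ?B n" .
  qed
  then have "uniform_limit {0..T} (\<lambda>N t. x0 + (\<Sum>n<N. u (Suc n) t - u n t))
      picard_solution sequentially"
    unfolding picard_solution_def[abs_def] by (intro uniform_limit_add uniform_limit_const)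
  moreover have "x0 + (\<Sum>n<N. u (Suc n) t - u n t) = u N t" for N t
    using sum_lessThan_telescope[of "\<lambda>n. u n t" N] by simp
  ultimately show ?thesis by simp
qed

lemma picard_solution_integral_equation:
  assumes "0 \<le> t"
  shows "picard_solution t = x0 + integral {0..t} (\<lambda>s. G (picard_solution s))"
proof -
  have "uniform_limit {0..t} (\<lambda>n s. G (u n s)) (G \<circ> picard_solution) sequentially"
    using uniform_limit_picard_iterate lipschitz_on_uniformly_continuous[OF G_lipschitz]
    by (rule uniform_limit_compose) auto
  then obtain I J where I: "\<And>n. ((\<lambda>s. G (u n s)) has_integral I n) {0..t}"
    and J: "((G \<circ> picard_solution) has_integral J) {0..t}" and "I \<longlonglongrightarrow> J"
    using continuous_on_compose2[OF lipschitz_on_continuous_on[OF G_lipschitz]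
        continuous_on_picard_iterate]
    by (rule uniform_limit_integral) auto
  then have "(\<lambda>n. u (Suc n) t) \<longlonglongrightarrow> x0 + integral {0..t} (\<lambda>s. G (picard_solution s))"
    by (simp add: picard_iterate_Suc integral_unique[OF I] integral_unique[OF J, unfolded o_def]
        tendsto_add)
  moreover have "(\<lambda>n. u (Suc n) t) \<longlonglongrightarrow> picard_solution t"
    using LIMSEQ_Suc[OF tendsto_uniform_limitI[OF uniform_limit_picard_iterate]] assms by auto
  ultimately show ?thesis using LIMSEQ_unique by blast
qed

lemma is_solution_picard_solution: "is_solution G picard_solution x0"
  unfolding is_solution_def
proof (intro conjI allI impI)
  show "picard_solution 0 = x0" using picard_solution_integral_equation[of 0] by simp
  fix t :: real assume t: "0 \<le> t"
  have "continuous_on {0..t+1} (\<lambda>s. G (picard_solution s))"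
    using uniform_limit_theorem[OF always_eventually uniform_limit_picard_iterate]
      continuous_on_picard_iterate
    by (intro continuous_on_compose2[OF lipschitz_on_continuous_on[OF G_lipschitz]]) auto
  then have "((\<lambda>s. x0 + integral {0..s} (\<lambda>s. G (picard_solution s)))
      has_vector_derivative G (picard_solution t)) (at t within {0..t+1})"
    using t by (auto intro!: derivative_eq_intros integral_has_vector_derivative)
  then have "(picard_solution has_vector_derivative G (picard_solution t)) (at t within {0..t+1})"
    by (rule has_vector_derivative_transform[rotated 2])
      (use t picard_solution_integral_equation in auto)
  moreover have "at t within {0..} = at t within {0..t+1}"
    by (rule at_within_nhd[where S="{..<t+1}"]) auto
  ultimately show "(picard_solution has_vector_derivative G (picard_solution t)) (at t within {0..})"
    by simp
qed

end

lemma lipschitz_ode_solution_exists: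
  fixes G :: "'a::banach \<Rightarrow> 'a"
  assumes "K-lipschitz_on UNIV G"
  shows "\<exists>u. is_solution G u x0"
  using is_solution_picard_solution[OF assms] by blast

section \<open>Lyapunov stability\<close>

lemma is_solution_const: "F q = 0 \<Longrightarrow> is_solution F (\<lambda>t. q) q"
  by (simp add: is_solution_def has_vector_derivative_const)

lemma not_asymptotically_stable_if_equilibria_accumulate:
  assumes "\<And>\<delta>. 0 < \<delta> \<Longrightarrow> \<exists>q. q \<noteq> p \<and> dist q p < \<delta> \<and> F q = 0"
  shows "\<not> asymptotically_stable F p"
proof
  assume "asymptotically_stable F p"
  then obtain \<delta> where "0 < \<delta>"
    and attract: "\<And>x0 u. dist x0 p < \<delta> \<Longrightarrow> is_solution F u x0 \<Longrightarrow> (u \<longlongrightarrow> p) at_top"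
    unfolding asymptotically_stable_def by blast
  obtain q where "q \<noteq> p" "dist q p < \<delta>" "F q = 0"
    using assms[OF \<open>0 < \<delta>\<close>] by blast
  then have "((\<lambda>t::real. q) \<longlongrightarrow> p) at_top"
    using attract is_solution_const by blast
  with \<open>q \<noteq> p\<close> show False by (simp add: tendsto_const_iff)
qed

lemma solution_continuous_on:
  assumes "\<And>t. 0 \<le> t \<Longrightarrow> (u has_vector_derivative G (u t)) (at t within {0..})"
  shows "continuous_on {0..} u"
  using assms by (intro continuous_on_vector_derivative) auto

lemma first_hitting_time:
  fixes g :: "real \<Rightarrow> real"
  assumes "continuous_on {0..t} g" "g 0 < c" "c \<le> g t" "0 \<le> t"
  obtains t1 where "0 \<le> t1" "t1 \<le> t" "g t1 = c" "\<And>s. 0 \<le> s \<Longrightarrow> s < t1 \<Longrightarrow> g s < c"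
proof -
  define S where "S = {0..t} \<inter> g -` {c..}"
  have "compact S"
  proof -
    have "closed S" unfolding S_def by (rule continuous_closed_preimage[OF assms(1)]) auto
    moreover have "bounded S" by (rule bounded_subset[of "{0..t}"]) (auto simp: S_def)
    ultimately show ?thesis by (simp add: compact_eq_bounded_closed)
  qed
  moreover have "t \<in> S" using assms by (simp add: S_def)
  ultimately obtain t1 where "t1 \<in> S" and t1_min: "\<And>s. s \<in> S \<Longrightarrow> t1 \<le> s"
    using compact_attains_inf[OF \<open>compact S\<close>] by blast
  then have t1: "0 \<le> t1" "t1 \<le> t" "c \<le> g t1" by (auto simp: S_def)
  have before: "g s < c" if "0 \<le> s" "s < t1" for s
  proof (rule ccontr)
    assume "\<not> g s < c"
    then have "s \<in> S" using that t1 by (auto simp: S_def)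
    then show False using t1_min[of s] that by simp
  qed
  obtain t2 where t2: "0 \<le> t2" "t2 \<le> t1" "g t2 = c"
    using IVT'[of g 0 c t1] assms(2) t1 continuous_on_subset[OF assms(1), of "{0..t1}"] by auto
  then have "t2 \<in> S" using t1 by (simp add: S_def)
  then have "g t1 = c" using t1_min[of t2] t2 by simp
  with t1 before show thesis using that by blast
qed

text \<open>At the first time a solution reaches the sphere of radius e1, V would have to have
  increased from below its minimum on that sphere.\<close>

lemma solution_stays_in_ball:
  fixes p :: "'a::real_normed_vector" and V :: "'a \<Rightarrow> real"
  assumes "0 < e1" "e1 \<le> e"
    and V_nonincreasing: "\<And>u T. 0 \<le> T \<Longrightarrow> (\<And>t. t \<in> {0..T} \<Longrightarrow> u t \<in> cball p e) \<Longrightarrow>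
        (\<And>t. t \<in> {0..T} \<Longrightarrow> (u has_vector_derivative F (u t)) (at t within {0..T})) \<Longrightarrow>
        V (u T) \<le> V (u 0)"
    and V_sphere: "\<And>q. q \<in> sphere p e1 \<Longrightarrow> m \<le> V q"
    and start: "dist (u 0) p < e1" "V (u 0) < m"
    and u: "\<And>t. 0 \<le> t \<Longrightarrow> (u has_vector_derivative G (u t)) (at t within {0..})"
    and G: "\<And>q. q \<in> cball p e \<Longrightarrow> G q = F q"
    and "0 \<le> t"
  shows "dist (u t) p < e1"
proof (rule ccontr)
  assume "\<not> dist (u t) p < e1"
  moreover have "continuous_on {0..t} (\<lambda>s. dist (u s) p)"
    using continuous_on_subset[OF solution_continuous_on[OF u]] by (intro continuous_intros) auto
  ultimately obtain t1 where t1: "0 \<le> t1" "dist (u t1) p = e1"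
    and before: "\<And>s. 0 \<le> s \<Longrightarrow> s < t1 \<Longrightarrow> dist (u s) p < e1"
    using first_hitting_time[of t "\<lambda>s. dist (u s) p" e1] start(1) \<open>0 \<le> t\<close> by auto
  have in_ball: "u s \<in> cball p e" if "s \<in> {0..t1}" for s
    using that before[of s] t1 \<open>e1 \<le> e\<close> by (cases "s = t1") (auto simp: dist_commute)
  have deriv: "(u has_vector_derivative F (u s)) (at s within {0..t1})" if "s \<in> {0..t1}" for s
    using has_vector_derivative_within_subset[OF u[of s]] that G[OF in_ball[OF that]] by auto
  have "V (u t1) \<le> V (u 0)"
    by (rule V_nonincreasing[where u=u, OF t1(1) in_ball deriv])
  moreover have "m \<le> V (u t1)" using t1 by (intro V_sphere) (simp add: dist_commute)
  ultimately show False using start(2) by linarith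
qed

lemma lipschitz_on_UNIV_closest_point_extension:
  fixes F :: "'a::euclidean_space \<Rightarrow> 'b::metric_space"
  assumes "convex S" "closed S" "S \<noteq> {}" "K-lipschitz_on S F"
  shows "K-lipschitz_on UNIV (F \<circ> closest_point S)"
proof -
  have "1-lipschitz_on UNIV (closest_point S)"
    using closest_point_lipschitz[OF assms(1-3)] by (intro lipschitz_onI) auto
  moreover have "K-lipschitz_on (closest_point S ` UNIV) F"
    by (rule lipschitz_on_subset[OF assms(4)]) (use closest_point_in_set[OF assms(2,3)] in auto)
  ultimately show ?thesis using lipschitz_on_compose by fastforce
qed

lemma lyapunov_level_separation:
  fixes V :: "'a::euclidean_space \<Rightarrow> real"
  assumes "0 < e1" "e1 \<le> e" and V_cont: "continuous_on (cball p e) V"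
    and V_strict_min: "\<And>q. q \<in> cball p e \<Longrightarrow> q \<noteq> p \<Longrightarrow> V p < V q"
  obtains m \<delta> where "0 < \<delta>" "\<And>q. q \<in> sphere p e1 \<Longrightarrow> m \<le> V q"
    "\<And>q. q \<in> cball p e \<Longrightarrow> dist q p < \<delta> \<Longrightarrow> V q < m"
proof -
  have "sphere p e1 \<subseteq> cball p e" using assms(1,2) by auto
  then obtain q0 where q0: "q0 \<in> sphere p e1" and V_sphere: "\<And>q. q \<in> sphere p e1 \<Longrightarrow> V q0 \<le> V q"
    using continuous_attains_inf[OF compact_sphere _ continuous_on_subset[OF V_cont]] assms(1)
    by (metis less_le_not_le sphere_eq_empty)
  have "V p < V q0" using q0 assms(1,2) by (intro V_strict_min) auto
  then have "\<exists>\<delta>>0. \<forall>q\<in>cball p e. dist q p < \<delta> \<longrightarrow> dist (V q) (V p) < V q0 - V p"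
    using V_cont assms(1,2) unfolding continuous_on_iff by simp
  then obtain \<delta> where "0 < \<delta>" "\<And>q. q \<in> cball p e \<Longrightarrow> dist q p < \<delta> \<Longrightarrow> V q < V q0"
    by (force simp: dist_real_def)
  then show thesis using that V_sphere by blast
qed

theorem lyapunov_stableI:
  fixes F :: "'a::euclidean_space \<Rightarrow> 'a" and V :: "'a \<Rightarrow> real"
  assumes "0 < e"
    and F_lipschitz: "K-lipschitz_on (cball p e) F"
    and V_cont: "continuous_on (cball p e) V"
    and V_strict_min: "\<And>q. q \<in> cball p e \<Longrightarrow> q \<noteq> p \<Longrightarrow> V p < V q"
    and V_nonincreasing: "\<And>u T. 0 \<le> T \<Longrightarrow> (\<And>t. t \<in> {0..T} \<Longrightarrow> u t \<in> cball p e) \<Longrightarrow>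
        (\<And>t. t \<in> {0..T} \<Longrightarrow> (u has_vector_derivative F (u t)) (at t within {0..T})) \<Longrightarrow>
        V (u T) \<le> V (u 0)"
  shows "lyapunov_stable F p"
  unfolding lyapunov_stable_def
proof (intro allI impI)
  fix \<epsilon> :: real assume "0 < \<epsilon>"
  define e1 where "e1 = min \<epsilon> e"
  have e1: "0 < e1" "e1 \<le> e" "e1 \<le> \<epsilon>" using \<open>0 < \<epsilon>\<close> \<open>0 < e\<close> by (auto simp: e1_def)
  obtain m \<delta> where "0 < \<delta>" and V_sphere: "\<And>q. q \<in> sphere p e1 \<Longrightarrow> m \<le> V q"
    and \<delta>: "\<And>q. q \<in> cball p e \<Longrightarrow> dist q p < \<delta> \<Longrightarrow> V q < m"
    using lyapunov_level_separation[OF e1(1,2) V_cont V_strict_min] by blast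
  have confined: "dist (u t) p < e1"
    if "dist (u 0) p < min \<delta> e1" "\<And>t. 0 \<le> t \<Longrightarrow> (u has_vector_derivative G (u t)) (at t within {0..})"
      "\<And>q. q \<in> cball p e \<Longrightarrow> G q = F q" "0 \<le> t" for u G t
  proof (rule solution_stays_in_ball[OF e1(1,2) V_nonincreasing _ _ _ that(2-4)])
    show "dist (u 0) p < e1" "V (u 0) < m"
      using that(1) e1 \<delta>[of "u 0"] by (auto simp: dist_commute)
  qed (use V_sphere in auto)
  txt \<open>Composing F with the projection onto the ball gives a globally Lipschitz field, which
    has solutions by Picard iteration; they never leave the ball, where the two fields agree.\<close>
  define G where "G = F \<circ> closest_point (cball p e)"
  have G_eq_F: "G q = F q" if "q \<in> cball p e" for q
    using that by (simp add: G_def closest_point_self)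
  show "\<exists>\<delta>>0. \<forall>x0. dist x0 p < \<delta> \<longrightarrow>
      (\<exists>u. is_solution F u x0) \<and> (\<forall>u. is_solution F u x0 \<longrightarrow> (\<forall>t\<ge>0. dist (u t) p < \<epsilon>))"
  proof (intro exI[of _ "min \<delta> e1"] conjI allI impI)
    show "0 < min \<delta> e1" using \<open>0 < \<delta>\<close> e1 by simp
    fix x0 assume x0: "dist x0 p < min \<delta> e1"
    have "K-lipschitz_on UNIV G"
      unfolding G_def using \<open>0 < e\<close> F_lipschitz
      by (intro lipschitz_on_UNIV_closest_point_extension) auto
    then obtain u where u: "is_solution G u x0" using lipschitz_ode_solution_exists by blast
    have "dist (u t) p < e1" if "0 \<le> t" for t
      using u x0 G_eq_F that by (intro confined[where G=G]) (auto simp: is_solution_def)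
    then have "is_solution F u x0"
      using u e1(2) G_eq_F by (fastforce simp: is_solution_def dist_commute)
    then show "\<exists>u. is_solution F u x0" by blast
    fix v and t :: real assume "is_solution F v x0" "0 \<le> t"
    then have "dist (v t) p < e1"
      using x0 by (intro confined[where G=F]) (auto simp: is_solution_def)
    then show "dist (v t) p < \<epsilon>" using e1 by simp
  qed
qed

lemma lipschitz_on_mult_compact:
  fixes f g :: "'a::metric_space \<Rightarrow> real"
  assumes "compact X" "L-lipschitz_on X f" "M-lipschitz_on X g"
  shows "\<exists>K. K-lipschitz_on X (\<lambda>x. f x * g x)"
proof -
  obtain A where "0 < A" and A: "\<And>x. x \<in> X \<Longrightarrow> \<bar>f x\<bar> \<le> A"
    using compact_imp_bounded[OF compact_continuous_image[OF lipschitz_on_continuous_on[OF assms(2)] assms(1)]]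
    by (auto simp: bounded_pos)
  obtain B where "0 < B" and B: "\<And>x. x \<in> X \<Longrightarrow> \<bar>g x\<bar> \<le> B"
    using compact_imp_bounded[OF compact_continuous_image[OF lipschitz_on_continuous_on[OF assms(3)] assms(1)]]
    by (auto simp: bounded_pos)
  have "(A * M + B * L)-lipschitz_on X (\<lambda>x. f x * g x)"
  proof (rule lipschitz_onI)
    fix x y assume xy: "x \<in> X" "y \<in> X"
    have "f x * g x - f y * g y = f x * (g x - g y) + g y * (f x - f y)" by algebra
    then have "dist (f x * g x) (f y * g y) \<le> \<bar>f x\<bar> * \<bar>g x - g y\<bar> + \<bar>g y\<bar> * \<bar>f x - f y\<bar>"
      by (simp add: dist_real_def abs_mult[symmetric] abs_triangle_ineq)
    also have "\<dots> \<le> A * (M * dist x y) + B * (L * dist x y)"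
      using xy A B \<open>0 < A\<close> \<open>0 < B\<close> lipschitz_onD[OF assms(2) xy] lipschitz_onD[OF assms(3) xy]
      by (intro add_mono mult_mono) (auto simp: dist_real_def)
    finally show "dist (f x * g x) (f y * g y) \<le> (A * M + B * L) * dist x y"
      by (simp add: algebra_simps)
  qed (use \<open>0 < A\<close> \<open>0 < B\<close> lipschitz_on_nonneg[OF assms(2)] lipschitz_on_nonneg[OF assms(3)] in simp)
  then show ?thesis ..
qed

lemma lipschitz_on_fst: "1-lipschitz_on X fst"
  by (rule lipschitz_onI) (auto simp: dist_fst_le)

lemma lipschitz_on_snd: "1-lipschitz_on X snd"
  by (rule lipschitz_onI) (auto simp: dist_snd_le)

lemma integral_Icc_max_lower:
  "integral {a..s} f = integral {a..max a s} (f :: real \<Rightarrow> 'b::banach)"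
  by (cases "s < a") auto

lemma norm_integral_Icc_upper_diff_le:
  fixes f :: "real \<Rightarrow> 'b::banach"
  assumes "continuous_on UNIV f" "\<And>s. norm (f s) \<le> B"
  shows "norm (integral {a..s} f - integral {a..s'} f) \<le> B * \<bar>s - s'\<bar>"
proof -
  have step: "norm (integral {a..t'} f - integral {a..t} f) \<le> B * (t' - t)"
    if "a \<le> t" "t \<le> t'" for t t'
  proof -
    have "f integrable_on {a..t'}"
      by (rule integrable_continuous_real, rule continuous_on_subset[OF assms(1)]) simp
    then have "integral {a..t'} f - integral {a..t} f = integral {t..t'} f"
      using Henstock_Kurzweil_Integration.integral_combine[OF that] by (metis add_diff_cancel_left')
    also have "norm \<dots> \<le> B * (t' - t)"
      using that assms by (intro integral_bound continuous_on_subset[OF assms(1)]) auto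
    finally show ?thesis .
  qed
  have "norm (integral {a..s} f - integral {a..s'} f)
      = norm (integral {a..max a s} f - integral {a..max a s'} f)"
    using integral_Icc_max_lower[of a s f] integral_Icc_max_lower[of a s' f] by simp
  also have "\<dots> \<le> B * \<bar>max a s - max a s'\<bar>"
  proof (cases "max a s \<le> max a s'")
    case True
    then show ?thesis using step[of "max a s" "max a s'"] by (simp add: norm_minus_commute)
  next
    case False
    then have "a \<le> max a s'" "max a s' \<le> max a s" by auto
    from step[OF this] False show ?thesis by simp
  qed
  also have "\<dots> \<le> B * \<bar>s - s'\<bar>"
    using order_trans[OF norm_ge_zero assms(2)] by (intro mult_left_mono) auto
  finally show ?thesis .
qed

lemma continuous_on_indefinite_integral_param:
  fixes f :: "'a::metric_space \<Rightarrow> real \<Rightarrow> 'b::banach"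
  assumes cont: "continuous_on UNIV (\<lambda>(c, s). f c s)" and bound: "\<And>c s. norm (f c s) \<le> B"
  shows "continuous_on UNIV (\<lambda>(c, s). integral {a..s} (f c))"
proof -
  have cont_s: "continuous_on UNIV (f c)" for c
    using continuous_on_compose2[OF cont, of UNIV "\<lambda>s. (c, s)"] by (simp add: continuous_on_Pair)
  have "isCont (\<lambda>(c, s). integral {a..s} (f c)) (c0, s0)" for c0 s0
  proof -
    have "continuous_on UNIV (\<lambda>c. integral (cbox a s0) (f c))"
      by (rule integral_continuous_on_param, rule continuous_on_subset[OF cont]) simp
    then have "isCont (\<lambda>c. integral {a..s0} (f c)) c0"
      by (simp add: continuous_on_eq_continuous_at)
    moreover have "(fst \<longlongrightarrow> c0) (at (c0, s0))"
      using tendsto_fst[OF tendsto_ident_at, of "(c0, s0)" UNIV] by simp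
    ultimately
    have lim_c: "((\<lambda>z. integral {a..s0} (f (fst z))) \<longlongrightarrow> integral {a..s0} (f c0)) (at (c0, s0))"
      by (rule isCont_tendsto_compose)
    have "((\<lambda>z. integral {a..snd z} (f (fst z)) - integral {a..s0} (f (fst z))) \<longlongrightarrow> 0) (at (c0, s0))"
    proof (rule Lim_null_comparison)
      show "\<forall>\<^sub>F z in at (c0, s0). norm (integral {a..snd z} (f (fst z)) - integral {a..s0} (f (fst z)))
          \<le> B * \<bar>snd z - s0\<bar>"
        using norm_integral_Icc_upper_diff_le[OF cont_s bound] by simp
      show "((\<lambda>z. B * \<bar>snd z - s0\<bar>) \<longlongrightarrow> 0) (at (c0, s0))"
        by (auto intro!: tendsto_eq_intros)
    qed
    from tendsto_add[OF this lim_c] show ?thesis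
      by (simp add: isCont_def case_prod_unfold)
  qed
  then show ?thesis by (auto intro: continuous_at_imp_continuous_on)
qed

lemma strict_min_if_derivative_sign:
  fixes f f' :: "real \<Rightarrow> real"
  assumes deriv: "\<And>x. a < x \<Longrightarrow> (f has_real_derivative f' x) (at x)"
    and sign: "\<And>x. a < x \<Longrightarrow> x \<noteq> x0 \<Longrightarrow> 0 < (x - x0) * f' x"
    and "a < x0" "a < x" "x \<noteq> x0"
  shows "f x0 < f x"
proof (cases "x < x0")
  case True
  then obtain z where z: "x < z" "z < x0" and mvt: "f x0 - f x = (x0 - x) * f' z"
    using MVT2[of x x0 f f'] deriv \<open>a < x\<close> by force
  have "f' z < 0" using sign[of z] z \<open>a < x\<close> by (simp add: zero_less_mult_iff)
  then have "(x0 - x) * f' z < 0" using True by (simp add: mult_pos_neg)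
  then show ?thesis using mvt by simp
next
  case False
  then have "x0 < x" using \<open>x \<noteq> x0\<close> by simp
  then obtain z where z: "x0 < z" "z < x" and mvt: "f x - f x0 = (x - x0) * f' z"
    using MVT2[of x0 x f f'] deriv \<open>a < x0\<close> by force
  have "0 < f' z" using sign[of z] z \<open>a < x0\<close> by (simp add: zero_less_mult_iff)
  then have "0 < (x - x0) * f' z" using \<open>x0 < x\<close> by simp
  then show ?thesis using mvt by simp
qed

lemma has_real_derivative_components:
  fixes u :: "real \<Rightarrow> real \<times> real \<times> real"
  assumes "(u has_vector_derivative (a, b, c)) F"
  shows "((\<lambda>t. fst (u t)) has_real_derivative a) F"
    and "((\<lambda>t. fst (snd (u t))) has_real_derivative b) F"
    and "((\<lambda>t. snd (snd (u t))) has_real_derivative c) F"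
proof -
  note fst = bounded_linear.has_vector_derivative[OF bounded_linear_fst]
  note snd = bounded_linear.has_vector_derivative[OF bounded_linear_snd]
  show "((\<lambda>t. fst (u t)) has_real_derivative a) F"
    using fst[OF assms] by (simp add: has_real_derivative_iff_has_vector_derivative)
  show "((\<lambda>t. fst (snd (u t))) has_real_derivative b) F"
    using fst[OF snd[OF assms]] by (simp add: has_real_derivative_iff_has_vector_derivative)
  show "((\<lambda>t. snd (snd (u t))) has_real_derivative c) F"
    using snd[OF snd[OF assms]] by (simp add: has_real_derivative_iff_has_vector_derivative)
qed

lemma ln_quadratic_le: "0 < r \<Longrightarrow> r < 1 \<Longrightarrow> ln (r * (1 - r)) \<le> ln (1/4)"
  and ln_quadratic_eq: "0 < r \<Longrightarrow> r < 1 \<Longrightarrow> ln (r * (1 - r)) = ln (1/4) \<Longrightarrow> r = 1/2"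
    for r :: real
proof -
  assume r: "0 < r" "r < 1"
  have id: "r * (1 - r) = 1/4 - (r - 1/2)\<^sup>2" by (simp add: power2_eq_square algebra_simps)
  have "0 < r * (1 - r)" using r by simp
  then show "ln (r * (1 - r)) \<le> ln (1/4)" unfolding id by (subst ln_le_cancel_iff) auto
  assume "ln (r * (1 - r)) = ln (1/4)"
  then have "r * (1 - r) = 1/4" using r by simp
  then show "r = 1/2" unfolding id by simp
qed

section \<open>Weighted logit functions\<close>

definition weighted_logit :: "real \<Rightarrow> real \<Rightarrow> real \<Rightarrow> real" where
  "weighted_logit a b x = a * ln x - b * ln (1 - x)"

definition weighted_logit_inv :: "real \<Rightarrow> real \<Rightarrow> real \<Rightarrow> real" where
  "weighted_logit_inv a b s = (THE x. 0 < x \<and> x < 1 \<and> weighted_logit a b x = s)"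

lemma weighted_logit_has_derivative:
  assumes "0 < x" "x < 1"
  shows "(weighted_logit a b has_real_derivative a / x + b / (1 - x)) (at x)"
proof -
  have "((\<lambda>x. ln (1 - x)) has_real_derivative inverse (1 - x) * (0 - 1)) (at x)"
    using DERIV_chain2[OF DERIV_ln[of "1 - x"] DERIV_diff[OF DERIV_const DERIV_ident]] assms
    by simp
  from DERIV_diff[OF DERIV_cmult[OF DERIV_ln[OF assms(1)]] DERIV_cmult[OF this]]
  have "((\<lambda>x. a * ln x - b * ln (1 - x)) has_real_derivative
      a * inverse x - b * (inverse (1 - x) * (0 - 1))) (at x)" .
  moreover have "a * inverse x - b * (inverse (1 - x) * (0 - 1)) = a / x + b / (1 - x)"
    by (simp add: divide_inverse)
  moreover have "(\<lambda>x. a * ln x - b * ln (1 - x)) = weighted_logit a b"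
    by (simp add: weighted_logit_def fun_eq_iff)
  ultimately show ?thesis by simp
qed

lemma weighted_logit_has_derivative_phi:
  assumes "0 < x" "x < 1"
  shows "(weighted_logit a b has_real_derivative phi a b x / (x * (1 - x))) (at x)"
proof -
  have "a / x + b / (1 - x) = phi a b x / (x * (1 - x))"
    using assms by (simp add: phi_def field_simps)
  then show ?thesis using weighted_logit_has_derivative[OF assms, where a=a and b=b] by simp
qed

context
  fixes a b :: real
  assumes a: "0 < a" and b: "0 < b"
begin

lemma weighted_logit_increment_ge:
  assumes "0 < u" "u \<le> v" "v < 1"
  shows "(a + b) * (v - u) \<le> weighted_logit a b v - weighted_logit a b u"
proof (cases "u = v")
  case False
  then have "u < v" using assms by simp
  have "(weighted_logit a b has_real_derivative a / x + b / (1 - x)) (at x)" if "u \<le> x" "x \<le> v" for x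
    using assms that by (intro weighted_logit_has_derivative) auto
  from MVT2[OF \<open>u < v\<close> this] obtain z where z: "u < z" "z < v"
    and mvt: "weighted_logit a b v - weighted_logit a b u = (v - u) * (a / z + b / (1 - z))"
    by blast
  have "a \<le> a / z" "b \<le> b / (1 - z)"
    using z assms a b by (simp_all add: field_simps)
  then have "(v - u) * (a + b) \<le> (v - u) * (a / z + b / (1 - z))"
    using assms by (intro mult_left_mono) auto
  then show ?thesis using mvt by (simp add: mult.commute)
qed simp

lemma weighted_logit_less:
  "0 < u \<Longrightarrow> u < v \<Longrightarrow> v < 1 \<Longrightarrow> weighted_logit a b u < weighted_logit a b v"
  using weighted_logit_increment_ge[of u v] a b by (smt (verit) mult_pos_pos)

lemma weighted_logit_inj:
  "0 < u \<Longrightarrow> u < 1 \<Longrightarrow> 0 < v \<Longrightarrow> v < 1 \<Longrightarrow> weighted_logit a b u = weighted_logit a b v \<Longrightarrow> u = v"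
  using weighted_logit_less[of u v] weighted_logit_less[of v u] by fastforce

lemma weighted_logit_surj: "\<exists>x. 0 < x \<and> x < 1 \<and> weighted_logit a b x = s"
proof -
  define u where "u = min (1/2) (exp ((s - b) / a))"
  define v where "v = 1 - min (1/2) (exp (- (s + a) / b))"
  have u: "0 < u" "u \<le> 1/2" and v: "1/2 \<le> v" "v < 1" by (auto simp: u_def v_def)
  have ln_half: "- 1 \<le> ln (1/2 :: real)" using ln_2_less_1 by (simp add: ln_div)
  have "weighted_logit a b u \<le> s"
  proof -
    have "ln u \<le> ln (exp ((s - b) / a))" using u by (subst ln_le_cancel_iff) (auto simp: u_def)
    then have "a * ln u \<le> s - b" using a by (simp add: field_simps)
    moreover have "ln (1/2) \<le> ln (1 - u)" using u by (subst ln_le_cancel_iff) auto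
    then have "b * (- 1) \<le> b * ln (1 - u)" using ln_half b by (intro mult_left_mono) auto
    ultimately show ?thesis by (simp add: weighted_logit_def)
  qed
  moreover have "s \<le> weighted_logit a b v"
  proof -
    have "ln (1 - v) \<le> ln (exp (- (s + a) / b))" using v by (subst ln_le_cancel_iff) (auto simp: v_def)
    then have "s + a \<le> - b * ln (1 - v)" using b by (simp add: field_simps)
    moreover have "ln (1/2) \<le> ln v" using v by (subst ln_le_cancel_iff) auto
    then have "a * (- 1) \<le> a * ln v" using ln_half a by (intro mult_left_mono) auto
    ultimately show ?thesis by (simp add: weighted_logit_def)
  qed
  moreover have "continuous_on {u..v} (weighted_logit a b)"
    unfolding weighted_logit_def using u v by (intro continuous_intros) auto
  ultimately obtain x where "u \<le> x" "x \<le> v" "weighted_logit a b x = s"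
    using IVT'[of "weighted_logit a b" u s v] u v by auto
  then show ?thesis using u v by (intro exI[of _ x]) auto
qed

lemma weighted_logit_inv:
  "0 < weighted_logit_inv a b s" "weighted_logit_inv a b s < 1"
  "weighted_logit a b (weighted_logit_inv a b s) = s"
proof -
  obtain x where x: "0 < x \<and> x < 1 \<and> weighted_logit a b x = s"
    using weighted_logit_surj by blast
  have "0 < weighted_logit_inv a b s \<and> weighted_logit_inv a b s < 1 \<and>
      weighted_logit a b (weighted_logit_inv a b s) = s"
    unfolding weighted_logit_inv_def by (rule theI[of _ x]) (use x weighted_logit_inj in blast)+
  then show "0 < weighted_logit_inv a b s" "weighted_logit_inv a b s < 1"
    "weighted_logit a b (weighted_logit_inv a b s) = s" by auto
qed

lemma weighted_logit_inv_weighted_logit: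
  "0 < x \<Longrightarrow> x < 1 \<Longrightarrow> weighted_logit_inv a b (weighted_logit a b x) = x"
  using weighted_logit_inv[of "weighted_logit a b x"] weighted_logit_inj by blast

lemma weighted_logit_inv_less:
  assumes "s < s'"
  shows "weighted_logit_inv a b s < weighted_logit_inv a b s'"
proof (rule ccontr)
  assume "\<not> ?thesis"
  then have "weighted_logit a b (weighted_logit_inv a b s') \<le> weighted_logit a b (weighted_logit_inv a b s)"
    using weighted_logit_less[of "weighted_logit_inv a b s'" "weighted_logit_inv a b s"]
      weighted_logit_inv
    by (cases "weighted_logit_inv a b s = weighted_logit_inv a b s'") auto
  then show False using assms by (simp add: weighted_logit_inv)
qed

lemma lipschitz_weighted_logit_inv: "(1 / (a + b))-lipschitz_on UNIV (weighted_logit_inv a b)"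
proof (rule lipschitz_onI)
  have *: "weighted_logit_inv a b s' - weighted_logit_inv a b s \<le> (s' - s) / (a + b)"
    if "s \<le> s'" for s s'
  proof -
    have "weighted_logit_inv a b s \<le> weighted_logit_inv a b s'"
      using weighted_logit_inv_less[of s s'] that by (cases "s = s'") auto
    from weighted_logit_increment_ge[OF weighted_logit_inv(1) this weighted_logit_inv(2)]
    have "(a + b) * (weighted_logit_inv a b s' - weighted_logit_inv a b s) \<le> s' - s"
      by (simp add: weighted_logit_inv)
    then show ?thesis using a b by (simp add: field_simps)
  qed
  fix s s' :: real
  show "dist (weighted_logit_inv a b s) (weighted_logit_inv a b s') \<le> 1 / (a + b) * dist s s'"
    using *[of s s'] *[of s' s] weighted_logit_inv_less[of s s'] weighted_logit_inv_less[of s' s]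
    by (cases s s' rule: linorder_cases) (auto simp: dist_real_def)
qed (use a b in simp)

end

section \<open>The modified Prisoner's Dilemma system\<close>

lemma phi_ge_min: "0 \<le> s \<Longrightarrow> s \<le> 1 \<Longrightarrow> min a b \<le> phi a b s"
proof -
  assume s: "0 \<le> s" "s \<le> 1"
  have "min a b * (1 - s) + min a b * s \<le> a * (1 - s) + b * s"
    using s by (intro add_mono mult_right_mono) auto
  then show ?thesis by (simp add: phi_def algebra_simps)
qed

lemma phi_pos: "0 < a \<Longrightarrow> 0 < b \<Longrightarrow> 0 \<le> s \<Longrightarrow> s \<le> 1 \<Longrightarrow> 0 < phi a b s"
  using phi_ge_min[of s a b] by linarith

lemma lipschitz_on_compact_pd_field:
  assumes "compact X"
  shows "\<exists>K. K-lipschitz_on X (pd_field dPS1 dTR1 dPS2 dTR2 th1 th2)"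
proof -
  have mult: "\<exists>K. K-lipschitz_on X (\<lambda>q. f q * g q)"
    if "\<exists>L. L-lipschitz_on X f" "\<exists>M. M-lipschitz_on X g" for f g :: "_ \<Rightarrow> real"
    using that lipschitz_on_mult_compact[OF assms] by blast
  have x: "1-lipschitz_on X (\<lambda>q. fst q)" and y: "1-lipschitz_on X (\<lambda>q. fst (snd q))"
    and r: "1-lipschitz_on X (\<lambda>q. snd (snd q))"
    using lipschitz_on_compose2[OF lipschitz_on_snd lipschitz_on_fst, of X]
      lipschitz_on_compose2[OF lipschitz_on_snd lipschitz_on_snd, of X]
    by (auto simp: lipschitz_on_fst)
  have "\<exists>K. K-lipschitz_on X
      (\<lambda>q. fst q * (1 - fst q) * phi dPS1 dTR1 (fst (snd q)) * (1 - 2 * snd (snd q)))"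
    unfolding phi_def by (intro mult) (rule exI, (rule lipschitz_intros x y r)+)+
  moreover have "\<exists>K. K-lipschitz_on X
      (\<lambda>q. fst (snd q) * (1 - fst (snd q)) * phi dPS2 dTR2 (fst q) * (1 - 2 * snd (snd q)))"
    unfolding phi_def by (intro mult) (rule exI, (rule lipschitz_intros x y r)+)+
  moreover have "\<exists>K. K-lipschitz_on X
      (\<lambda>q. snd (snd q) * (1 - snd (snd q)) * ((1 + th1) * fst q + (1 + th2) * fst (snd q) - 2))"
    by (intro mult) (rule exI, (rule lipschitz_intros x y r)+)+
  ultimately show ?thesis
    unfolding pd_field_def case_prod_unfold
    by (elim exE) (rule exI, rule lipschitz_on_Pair, assumption, rule lipschitz_on_Pair; assumption)
qed

locale pd_interior_equilibrium =
  fixes dPS1 dTR1 dPS2 dTR2 th1 th2 xs ys :: real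
  assumes pos: "0 < dPS1" "0 < dTR1" "0 < dPS2" "0 < dTR2" "0 < th1" "0 < th2"
    and xs: "0 < xs" "xs < 1" and ys: "0 < ys" "ys < 1"
    and on_line: "(1 + th1) * xs + (1 + th2) * ys = 2"
begin

abbreviation "F \<equiv> pd_field dPS1 dTR1 dPS2 dTR2 th1 th2"
abbreviation "p \<equiv> (xs, ys, 1/2 :: real)"

abbreviation "P \<equiv> weighted_logit dPS2 dTR2"
abbreviation "Q \<equiv> weighted_logit dPS1 dTR1"
abbreviation "P_inv \<equiv> weighted_logit_inv dPS2 dTR2"
abbreviation "Q_inv \<equiv> weighted_logit_inv dPS1 dTR1"

definition growth :: "real \<Rightarrow> real \<Rightarrow> real" where
  "growth x y = (1 + th1) * x + (1 + th2) * y - 2"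

lemma F_apply:
  "F (x, y, r) = (x * (1 - x) * phi dPS1 dTR1 y * (1 - 2 * r),
     y * (1 - y) * phi dPS2 dTR2 x * (1 - 2 * r), r * (1 - r) * growth x y)"
  by (simp add: pd_field_def growth_def)

lemma P_inv: "0 < P_inv s" "P_inv s < 1" "P (P_inv s) = s"
  using weighted_logit_inv[OF pos(3,4)] by auto

lemma Q_inv: "0 < Q_inv s" "Q_inv s < 1" "Q (Q_inv s) = s"
  using weighted_logit_inv[OF pos(1,2)] by auto

lemma continuous_P_inv: "continuous_on UNIV P_inv"
  using lipschitz_weighted_logit_inv[OF pos(3,4)] by (rule lipschitz_on_continuous_on)

lemma continuous_Q_inv: "continuous_on UNIV Q_inv"
  using lipschitz_weighted_logit_inv[OF pos(1,2)] by (rule lipschitz_on_continuous_on)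

text \<open>The level set P x - Q y = c, parametrised by s = Q y; along it the r-equation turns into
  d/ds ln (r (1 - r)) = level_integrand c s.\<close>

definition level_integrand :: "real \<Rightarrow> real \<Rightarrow> real" where
  "level_integrand c s = growth (P_inv (s + c)) (Q_inv s)
     / (phi dPS1 dTR1 (Q_inv s) * phi dPS2 dTR2 (P_inv (s + c)))"

lemma phi_Q_inv_pos: "0 < phi dPS1 dTR1 (Q_inv s)"
  using phi_pos[OF pos(1,2)] Q_inv by (simp add: less_imp_le)

lemma phi_P_inv_pos: "0 < phi dPS2 dTR2 (P_inv s)"
  using phi_pos[OF pos(3,4)] P_inv by (simp add: less_imp_le)

lemma level_integrand_on_level_set:
  assumes "0 < x" "x < 1" "0 < y" "y < 1"
  shows "level_integrand (P x - Q y) (Q y) = growth x y / (phi dPS1 dTR1 y * phi dPS2 dTR2 x)"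
  using assms weighted_logit_inv_weighted_logit[OF pos(1,2)] weighted_logit_inv_weighted_logit[OF pos(3,4)]
  by (simp add: level_integrand_def)

lemma abs_level_integrand_le:
  "\<bar>level_integrand c s\<bar> \<le> (2 + th1 + th2) / (min dPS1 dTR1 * min dPS2 dTR2)"
proof -
  let ?x = "P_inv (s + c)" and ?y = "Q_inv s"
  have "\<bar>growth ?x ?y\<bar> \<le> 2 + th1 + th2"
    using P_inv Q_inv pos unfolding growth_def abs_le_iff
    by (smt (verit) mult_less_cancel_left2 mult_pos_pos)
  moreover have "min dPS1 dTR1 \<le> phi dPS1 dTR1 ?y" "min dPS2 dTR2 \<le> phi dPS2 dTR2 ?x"
    using P_inv Q_inv by (auto intro!: phi_ge_min simp: less_imp_le)
  then have "min dPS1 dTR1 * min dPS2 dTR2 \<le> phi dPS1 dTR1 ?y * phi dPS2 dTR2 ?x"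
    using pos by (intro mult_mono) auto
  ultimately show ?thesis
    unfolding level_integrand_def abs_divide using phi_Q_inv_pos phi_P_inv_pos pos
    by (intro frac_le) auto
qed

lemma continuous_level_integrand: "continuous_on UNIV (\<lambda>(c, s). level_integrand c s)"
proof -
  have Pc: "continuous_on UNIV (\<lambda>z :: real \<times> real. P_inv (snd z + fst z))"
    by (rule continuous_on_compose2[OF continuous_P_inv], intro continuous_intros) auto
  have Qc: "continuous_on UNIV (\<lambda>z :: real \<times> real. Q_inv (snd z))"
    by (rule continuous_on_compose2[OF continuous_Q_inv], intro continuous_intros) auto
  have "dPS1 + (dTR1 - dPS1) * Q_inv s \<noteq> 0" "dPS2 + (dTR2 - dPS2) * P_inv s \<noteq> 0" for s
    using phi_Q_inv_pos[of s] phi_P_inv_pos[of s] unfolding phi_def by linarith+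
  then show ?thesis
    unfolding level_integrand_def[abs_def] growth_def phi_def case_prod_unfold
    by (intro continuous_intros Pc Qc) simp
qed

text \<open>The lower limit Q (ys/2) is arbitrary, except that it must lie below Q y at every point of
  domain: below the lower limit the integral is constantly 0.\<close>

definition level_potential :: "real \<Rightarrow> real \<Rightarrow> real" where
  "level_potential c s = integral {Q (ys/2)..s} (level_integrand c)"

lemma continuous_level_potential: "continuous_on UNIV (\<lambda>(c, s). level_potential c s)"
  unfolding level_potential_def[abs_def] using abs_level_integrand_le
  by (intro continuous_on_indefinite_integral_param[OF continuous_level_integrand]) simp

lemma level_potential_has_derivative:
  assumes "Q (ys/2) < s"
  shows "(level_potential c has_real_derivative level_integrand c s) (at s)"
proof -
  have "continuous_on UNIV (level_integrand c)"
    using continuous_on_compose2[OF continuous_level_integrand, of UNIV "\<lambda>s. (c, s)"]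
    by (simp add: continuous_on_Pair)
  then have "(level_potential c has_real_derivative level_integrand c s) (at s within {Q (ys/2)..s+1})"
    unfolding level_potential_def[abs_def] using assms
    by (intro integral_has_real_derivative) (auto intro: continuous_on_subset)
  moreover have "at s within {Q (ys/2)..s+1} = at s"
    using assms by (intro at_within_interior) auto
  ultimately show ?thesis by simp
qed

lemma level_integrand_sign:
  assumes "s \<noteq> Q ys"
  shows "0 < (s - Q ys) * level_integrand (P xs - Q ys) s"
proof -
  define N where "N s = growth (P_inv (s + (P xs - Q ys))) (Q_inv s)" for s
  have N_less: "N s < N s'" if "s < s'" for s s'
    using weighted_logit_inv_less[OF pos(3,4), of "s + (P xs - Q ys)" "s' + (P xs - Q ys)"]
      weighted_logit_inv_less[OF pos(1,2), of s s'] that pos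
    unfolding N_def growth_def by (smt (verit) mult_strict_left_mono)
  have "N (Q ys) = 0"
    using weighted_logit_inv_weighted_logit[OF pos(1,2) ys] weighted_logit_inv_weighted_logit[OF pos(3,4) xs]
      on_line by (simp add: N_def growth_def)
  then have "0 < (s - Q ys) * N s"
    using N_less[of s "Q ys"] N_less[of "Q ys" s] assms
    by (cases "s < Q ys") (auto simp: mult_neg_neg)
  moreover have "0 < phi dPS1 dTR1 (Q_inv s) * phi dPS2 dTR2 (P_inv (s + (P xs - Q ys)))"
    using phi_Q_inv_pos phi_P_inv_pos by simp
  ultimately show ?thesis
    unfolding level_integrand_def N_def[symmetric] by (simp add: zero_less_mult_iff zero_less_divide_iff)
qed

lemma level_potential_strict_min:
  assumes "Q (ys/2) < s" "s \<noteq> Q ys"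
  shows "level_potential (P xs - Q ys) (Q ys) < level_potential (P xs - Q ys) s"
proof (rule strict_min_if_derivative_sign[OF level_potential_has_derivative level_integrand_sign])
  show "Q (ys/2) < Q ys" using weighted_logit_less[OF pos(1,2)] ys by simp
qed (use assms in auto)

definition H :: "real \<times> real \<times> real \<Rightarrow> real" where
  "H q = P (fst q) - Q (fst (snd q))"

definition V :: "real \<times> real \<times> real \<Rightarrow> real" where
  "V q = level_potential (H q) (Q (fst (snd q))) - ln (snd (snd q) * (1 - snd (snd q)))"

definition domain :: "(real \<times> real \<times> real) set" where
  "domain = {0<..<1} \<times> {ys/2<..<1} \<times> {0<..<1}"

lemma open_domain: "open domain"
  by (simp add: domain_def open_Times)

lemma equilibrium_in_domain: "p \<in> domain"
  using xs ys by (simp add: domain_def)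

lemma mem_domain:
  assumes "(x, y, r) \<in> domain"
  shows "0 < x" "x < 1" "ys/2 < y" "0 < y" "y < 1" "0 < r" "r < 1"
  using assms ys by (auto simp: domain_def)

lemma H_has_derivative_along_solution:
  assumes "u t \<in> domain" "(u has_vector_derivative F (u t)) (at t within S)"
  shows "((\<lambda>t. H (u t)) has_real_derivative 0) (at t within S)"
proof -
  obtain x y r where u: "u t = (x, y, r)" by (cases "u t") auto
  note b = mem_domain[OF assms(1)[unfolded u]]
  note d = has_real_derivative_components[OF assms(2)[unfolded u F_apply]]
  have "((\<lambda>t. P (fst (u t)) - Q (fst (snd (u t)))) has_real_derivative
      phi dPS2 dTR2 x / (x * (1 - x)) * (x * (1 - x) * phi dPS1 dTR1 y * (1 - 2 * r))
      - phi dPS1 dTR1 y / (y * (1 - y)) * (y * (1 - y) * phi dPS2 dTR2 x * (1 - 2 * r)))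
      (at t within S)"
    using DERIV_chain2[OF weighted_logit_has_derivative_phi d(1)]
      DERIV_chain2[OF weighted_logit_has_derivative_phi d(2)] b
    by (intro DERIV_diff) (auto simp: u)
  moreover have "phi dPS2 dTR2 x / (x * (1 - x)) * (x * (1 - x) * phi dPS1 dTR1 y * (1 - 2 * r))
      - phi dPS1 dTR1 y / (y * (1 - y)) * (y * (1 - y) * phi dPS2 dTR2 x * (1 - 2 * r)) = 0"
    using b by (simp add: field_simps)
  ultimately show ?thesis by (simp add: H_def)
qed

lemma potential_has_derivative_along_solution:
  assumes "u t \<in> domain" "(u has_vector_derivative F (u t)) (at t within S)" "H (u t) = c"
  shows "((\<lambda>t. level_potential c (Q (fst (snd (u t))))
      - ln (snd (snd (u t)) * (1 - snd (snd (u t))))) has_real_derivative 0) (at t within S)"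
proof -
  obtain x y r where u: "u t = (x, y, r)" by (cases "u t") auto
  note b = mem_domain[OF assms(1)[unfolded u]]
  note d = has_real_derivative_components[OF assms(2)[unfolded u F_apply]]
  have c: "c = P x - Q y" using assms(3) by (simp add: H_def u)
  have "Q (ys/2) < Q y" using weighted_logit_less[OF pos(1,2)] b ys by simp
  then have pot: "((\<lambda>t. level_potential c (Q (fst (snd (u t))))) has_real_derivative
      level_integrand c (Q y) * (phi dPS1 dTR1 y / (y * (1 - y)) * (y * (1 - y) * phi dPS2 dTR2 x * (1 - 2 * r))))
      (at t within S)"
    using DERIV_chain2[OF level_potential_has_derivative DERIV_chain2[OF weighted_logit_has_derivative_phi d(2)]] b
    by (simp add: u)
  have log: "((\<lambda>t. ln (snd (snd (u t)) * (1 - snd (snd (u t))))) has_real_derivative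
      inverse (r * (1 - r)) * (r * (1 - r) * growth x y * (1 - r) + r * (0 - r * (1 - r) * growth x y)))
      (at t within S)"
    using DERIV_chain2[OF DERIV_ln DERIV_mult[OF d(3) DERIV_diff[OF DERIV_const[of 1] d(3)]]] b
    by (simp add: u algebra_simps)
  have cancel: "level_integrand c (Q y) * (phi dPS1 dTR1 y / (y * (1 - y)) * (y * (1 - y) * phi dPS2 dTR2 x * (1 - 2 * r)))
      - inverse (r * (1 - r)) * (r * (1 - r) * growth x y * (1 - r) + r * (0 - r * (1 - r) * growth x y)) = 0"
  proof -
    have key: "g / (A * B) * (A / (y * (1 - y)) * (y * (1 - y) * B * (1 - 2 * r)))
        - inverse (r * (1 - r)) * (r * (1 - r) * g * (1 - r) + r * (0 - r * (1 - r) * g)) = 0"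
      if "A \<noteq> 0" "B \<noteq> 0" "y \<noteq> 0" "y \<noteq> 1" "r \<noteq> 0" "r \<noteq> 1" for A B g y r :: real
      using that by (simp add: field_simps)
    have "level_integrand c (Q y) = growth x y / (phi dPS1 dTR1 y * phi dPS2 dTR2 x)"
      using b by (simp add: c level_integrand_on_level_set)
    then show ?thesis
      by (simp only:) (rule key, use b phi_pos[OF pos(1,2), of y] phi_pos[OF pos(3,4), of x] in auto)
  qed
  show ?thesis using DERIV_diff[OF pot log] cancel by simp
qed

lemma H_V_constant_along_solution:
  assumes "0 \<le> T" and in_domain: "\<And>t. t \<in> {0..T} \<Longrightarrow> u t \<in> domain"
    and deriv: "\<And>t. t \<in> {0..T} \<Longrightarrow> (u has_vector_derivative F (u t)) (at t within {0..T})"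
  shows "H (u T) = H (u 0)" "V (u T) = V (u 0)"
proof -
  obtain c where c: "\<And>t. t \<in> {0..T} \<Longrightarrow> H (u t) = c"
    using has_field_derivative_zero_constant[of "{0..T}" "\<lambda>t. H (u t)"]
      H_has_derivative_along_solution[OF in_domain deriv] by auto
  then show "H (u T) = H (u 0)" using \<open>0 \<le> T\<close> by simp
  define W where "W t = level_potential c (Q (fst (snd (u t))))
    - ln (snd (snd (u t)) * (1 - snd (snd (u t))))" for t
  obtain w where "\<And>t. t \<in> {0..T} \<Longrightarrow> W t = w"
    using has_field_derivative_zero_constant[of "{0..T}" W]
      potential_has_derivative_along_solution[OF in_domain deriv c]
    unfolding W_def by auto
  then show "V (u T) = V (u 0)" using \<open>0 \<le> T\<close> c by (simp add: V_def W_def)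
qed

definition lyapunov_fun :: "real \<times> real \<times> real \<Rightarrow> real" where
  "lyapunov_fun q = \<bar>H q - H p\<bar> + \<bar>V q - V p\<bar>"

lemma continuous_on_H: "continuous_on domain H"
  unfolding H_def[abs_def] weighted_logit_def
  by (intro continuous_intros) (use ys in \<open>auto simp: domain_def\<close>)

lemma continuous_on_lyapunov_fun: "continuous_on domain lyapunov_fun"
proof -
  have "continuous_on domain (\<lambda>q. Q (fst (snd q)))"
    unfolding weighted_logit_def by (intro continuous_intros) (use ys in \<open>auto simp: domain_def\<close>)
  then have "continuous_on domain (\<lambda>q. (\<lambda>(c, s). level_potential c s) (H q, Q (fst (snd q))))"
    using continuous_on_H
    by (intro continuous_on_compose2[OF continuous_level_potential] continuous_intros) auto
  then have "continuous_on domain V"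
    unfolding V_def[abs_def] by (intro continuous_intros) (use ys in \<open>auto simp: domain_def\<close>)
  then show ?thesis
    unfolding lyapunov_fun_def[abs_def] using continuous_on_H by (intro continuous_intros)
qed

lemma lyapunov_fun_equilibrium: "lyapunov_fun p = 0"
  by (simp add: lyapunov_fun_def)

lemma lyapunov_fun_pos:
  assumes "q \<in> domain" "q \<noteq> p"
  shows "0 < lyapunov_fun q"
proof (rule ccontr)
  obtain x y r where q: "q = (x, y, r)" by (cases q) auto
  note b = mem_domain[OF assms(1)[unfolded q]]
  assume "\<not> 0 < lyapunov_fun q"
  then have "H q = H p" "V q = V p" by (auto simp: lyapunov_fun_def)
  then have H_eq: "P x - Q y = P xs - Q ys"
    and V_eq: "level_potential (P xs - Q ys) (Q y) - ln (r * (1 - r))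
      = level_potential (P xs - Q ys) (Q ys) - ln (1/4)"
    by (simp_all add: H_def V_def q)
  have "Q y = Q ys"
  proof (rule ccontr)
    assume "Q y \<noteq> Q ys"
    moreover have "Q (ys/2) < Q y" using weighted_logit_less[OF pos(1,2)] b ys by simp
    ultimately have "level_potential (P xs - Q ys) (Q ys) < level_potential (P xs - Q ys) (Q y)"
      by (rule level_potential_strict_min[rotated])
    then show False using V_eq ln_quadratic_le[OF b(6,7)] by linarith
  qed
  then have "y = ys" using weighted_logit_inj[OF pos(1,2)] b ys by blast
  moreover have "r = 1/2"
    using V_eq \<open>Q y = Q ys\<close> by (intro ln_quadratic_eq[OF b(6,7)]) simp
  moreover have "x = xs"
    using H_eq \<open>y = ys\<close> weighted_logit_inj[OF pos(3,4)] b xs by simp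
  ultimately show False using assms(2) q by simp
qed

lemma lyapunov_stable_equilibrium: "lyapunov_stable F p"
proof -
  obtain e where "0 < e" and ball_dom: "cball p e \<subseteq> domain"
    using open_contains_cball[of domain] open_domain equilibrium_in_domain by blast
  obtain K where "K-lipschitz_on (cball p e) F"
    using lipschitz_on_compact_pd_field[OF compact_cball] by blast
  then show ?thesis
  proof (rule lyapunov_stableI[OF \<open>0 < e\<close>])
    show "continuous_on (cball p e) lyapunov_fun"
      using continuous_on_lyapunov_fun ball_dom by (rule continuous_on_subset)
    show "lyapunov_fun p < lyapunov_fun q" if "q \<in> cball p e" "q \<noteq> p" for q
      using lyapunov_fun_pos[of q] that ball_dom by (auto simp: lyapunov_fun_equilibrium)
    show "lyapunov_fun (u T) \<le> lyapunov_fun (u 0)"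
      if "0 \<le> T" "\<And>t. t \<in> {0..T} \<Longrightarrow> u t \<in> cball p e"
        "\<And>t. t \<in> {0..T} \<Longrightarrow> (u has_vector_derivative F (u t)) (at t within {0..T})" for u T
    proof -
      have "u t \<in> domain" if "t \<in> {0..T}" for t
        using that \<open>\<And>t. t \<in> {0..T} \<Longrightarrow> u t \<in> cball p e\<close> ball_dom by blast
      from H_V_constant_along_solution[OF \<open>0 \<le> T\<close> this that(3)]
      show ?thesis by (simp add: lyapunov_fun_def)
    qed
  qed
qed

lemma equilibria_near_equilibrium:
  assumes "0 < \<delta>"
  shows "\<exists>q. q \<noteq> p \<and> dist q p < \<delta> \<and> F q = 0"
proof -
  define k where "k = 2 + th1 + th2"
  define h where "h = \<delta> / (2 * k)"
  have "0 < k" using pos by (simp add: k_def)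
  then have h: "0 < h" "h * k < \<delta>" using assms by (auto simp: h_def)
  define q where "q = (xs + h * (1 + th2), ys - h * (1 + th1), 1/2 :: real)"
  have "dist q p \<le> \<bar>h * (1 + th2)\<bar> + (\<bar>h * (1 + th1)\<bar> + 0)"
    using norm_Pair_le[of "h * (1 + th2)" "(- (h * (1 + th1)), 0 :: real)"]
      norm_Pair_le[of "- (h * (1 + th1))" "0 :: real"]
    by (simp add: q_def dist_norm)
  also have "\<dots> = h * k" using h pos by (simp add: k_def algebra_simps)
  finally have "dist q p < \<delta>" using h by simp
  moreover have "F q = 0"
    using on_line by (simp add: q_def F_apply growth_def algebra_simps zero_prod_def)
  moreover have "q \<noteq> p" using h pos by (simp add: q_def)
  ultimately show ?thesis by blast
qed

theorem neutrally_stable_equilibrium: "neutrally_stable F p"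
  unfolding neutrally_stable_def
  using lyapunov_stable_equilibrium
    not_asymptotically_stable_if_equilibria_accumulate[OF equilibria_near_equilibrium]
  by blast

end

theorem corollary1:
  fixes dPS1 dTR1 dPS2 dTR2 th1 th2 xs ys :: real
  assumes "dPS1 > 0" "dTR1 > 0" "dPS2 > 0" "dTR2 > 0" "th1 > 0" "th2 > 0"
    and "0 < xs" "xs < 1" "0 < ys" "ys < 1"
    and "(1 + th1) * xs + (1 + th2) * ys = 2"
  shows "neutrally_stable (pd_field dPS1 dTR1 dPS2 dTR2 th1 th2) (xs, ys, 1/2)"
proof -
  interpret pd_interior_equilibrium dPS1 dTR1 dPS2 dTR2 th1 th2 xs ys
    using assms by unfold_locales
  show ?thesis by (rule neutrally_stable_equilibrium)
qed

end
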